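(* Let $G$ be a completable graph and let $A(G)$ and $B(G)$ be $G$-partial positive definite matrices. Then $$\mathfrak{p}^+[A(G)-B(G)]\subset\mathfrak{p}^+[A(G)]-\mathfrak{p}^+[B(G)]:=\{M-N: M\in\mathfrak{p}^+[A(G)],\ N\in\mathfrak{p}^+[B(G)]\}.$$
   Context: A graph $G=(V,E)$ is a finite undirected graph on $V=\{1,\dots,n\}$ containing all loops. A $G$-partial matrix has entries specified exactly for $\{i,j\}\in E$; a completion is an $n\times n$ matrix agreeing with it on $E$. Differences of $G$-partial matrices are taken entrywise on $E$. A $G$-partial matrix $[a_{ij}]_G$ is partial positive definite if $a_{ji}=\overline{a_{ij}}$ on $E$ and every principal submatrix indexed by a clique of $G$ is positive definite. $G$ is completable if every $G$-partial positive semidefinite matrix has a positive semidefinite completion (equivalently $G$ is chordal). $\mathfrak{p}^+[A(G)]$ denotes the set of positive definite completions of $A(G)$. *)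

theory Defs
  imports Complex_Main "Jordan_Normal_Form.Matrix"
begin

text \<open>A partial matrix is a function
a :: nat => nat => complex whose entries only matter on E.\<close>

definition graph_on :: "nat \<Rightarrow> (nat \<times> nat) set \<Rightarrow> bool" where
  "graph_on n E \<longleftrightarrow> E \<subseteq> {..<n} \<times> {..<n} \<and> sym E \<and> (\<forall>i<n. (i, i) \<in> E)"

definition clique :: "nat \<Rightarrow> (nat \<times> nat) set \<Rightarrow> nat set \<Rightarrow> bool" where
  "clique n E K \<longleftrightarrow> K \<subseteq> {..<n} \<and> K \<times> K \<subseteq> E"

definition quad_form :: "nat set \<Rightarrow> (nat \<Rightarrow> nat \<Rightarrow> complex) \<Rightarrow> (nat \<Rightarrow> complex) \<Rightarrow> complex" where
  "quad_form K a x = (\<Sum>i\<in>K. \<Sum>j\<in>K. cnj (x i) * a i j * x j)"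

definition pd_on :: "nat set \<Rightarrow> (nat \<Rightarrow> nat \<Rightarrow> complex) \<Rightarrow> bool" where
  "pd_on K a \<longleftrightarrow> (\<forall>i\<in>K. \<forall>j\<in>K. a j i = cnj (a i j)) \<and>
     (\<forall>x. (\<exists>i\<in>K. x i \<noteq> 0) \<longrightarrow> 0 < Re (quad_form K a x))"

definition psd_on :: "nat set \<Rightarrow> (nat \<Rightarrow> nat \<Rightarrow> complex) \<Rightarrow> bool" where
  "psd_on K a \<longleftrightarrow> (\<forall>i\<in>K. \<forall>j\<in>K. a j i = cnj (a i j)) \<and>
     (\<forall>x. 0 \<le> Re (quad_form K a x))"

definition partial_pd :: "nat \<Rightarrow> (nat \<times> nat) set \<Rightarrow> (nat \<Rightarrow> nat \<Rightarrow> complex) \<Rightarrow> bool" where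
  "partial_pd n E a \<longleftrightarrow> (\<forall>(i, j)\<in>E. a j i = cnj (a i j)) \<and> (\<forall>K. clique n E K \<longrightarrow> pd_on K a)"

definition partial_psd :: "nat \<Rightarrow> (nat \<times> nat) set \<Rightarrow> (nat \<Rightarrow> nat \<Rightarrow> complex) \<Rightarrow> bool" where
  "partial_psd n E a \<longleftrightarrow> (\<forall>(i, j)\<in>E. a j i = cnj (a i j)) \<and> (\<forall>K. clique n E K \<longrightarrow> psd_on K a)"

definition completions :: "nat \<Rightarrow> (nat \<times> nat) set \<Rightarrow> (nat \<Rightarrow> nat \<Rightarrow> complex) \<Rightarrow> complex mat set" where
  "completions n E a = {M \<in> carrier_mat n n. \<forall>(i, j)\<in>E. M $$ (i, j) = a i j}"

definition pos_def_mat :: "complex mat \<Rightarrow> bool" where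
  "pos_def_mat M \<longleftrightarrow> dim_row M = dim_col M \<and> pd_on {..<dim_row M} (\<lambda>i j. M $$ (i, j))"

definition pos_semidef_mat :: "complex mat \<Rightarrow> bool" where
  "pos_semidef_mat M \<longleftrightarrow> dim_row M = dim_col M \<and> psd_on {..<dim_row M} (\<lambda>i j. M $$ (i, j))"

definition pd_completions :: "nat \<Rightarrow> (nat \<times> nat) set \<Rightarrow> (nat \<Rightarrow> nat \<Rightarrow> complex) \<Rightarrow> complex mat set" where
  "pd_completions n E a = {M \<in> completions n E a. pos_def_mat M}"

definition completable :: "nat \<Rightarrow> (nat \<times> nat) set \<Rightarrow> bool" where
  "completable n E \<longleftrightarrow> (\<forall>a. partial_psd n E a \<longrightarrow> (\<exists>M\<in>completions n E a. pos_semidef_mat M))"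

end

theory Submission
  imports Defs "HOL-Analysis.Function_Topology" "HOL-Analysis.Topology_Euclidean_Space"
begin

text \<open>Take any positive definite completion N of B(G); then P + N is a positive definite
completion of A(G) for every positive definite completion P of A(G) - B(G), and P = (P + N) - N.
So everything rests on the existence of N. A positive definite matrix on a finite index set K
satisfies x* A x \<ge> e |x|^2 for some e > 0, by compactness of the unit sphere; taking the least
such e over the finitely many cliques, B(G) - e I is partial positive semidefinite, so by
completability it has a positive semidefinite completion M0, and M0 + e I is positive definite.\<close>

definition sq_norm_on :: "nat set \<Rightarrow> (nat \<Rightarrow> complex) \<Rightarrow> real" where
  "sq_norm_on K x = (\<Sum>i\<in>K. (cmod (x i))\<^sup>2)"

lemma sq_norm_on_nonneg: "0 \<le> sq_norm_on K x"
  unfolding sq_norm_on_def by (simp add: sum_nonneg)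

lemma sq_norm_on_eq_0_iff: "finite K \<Longrightarrow> sq_norm_on K x = 0 \<longleftrightarrow> (\<forall>i\<in>K. x i = 0)"
  unfolding sq_norm_on_def by (simp add: sum_nonneg_eq_0_iff)

lemma sq_norm_on_scaleR: "sq_norm_on K (\<lambda>i. of_real r * x i) = r\<^sup>2 * sq_norm_on K x"
  unfolding sq_norm_on_def by (simp add: norm_mult power_mult_distrib sum_distrib_left)

lemma continuous_on_sq_norm_on: "continuous_on UNIV (sq_norm_on K)"
  unfolding sq_norm_on_def by (intro continuous_intros continuous_on_product_coordinates)

lemma quad_form_cong:
  "(\<And>i j. i \<in> K \<Longrightarrow> j \<in> K \<Longrightarrow> a i j = b i j) \<Longrightarrow> (\<And>i. i \<in> K \<Longrightarrow> x i = y i)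
    \<Longrightarrow> quad_form K a x = quad_form K b y"
  unfolding quad_form_def by (intro sum.cong) auto

lemma quad_form_add: "quad_form K (\<lambda>i j. a i j + b i j) x = quad_form K a x + quad_form K b x"
  unfolding quad_form_def by (simp add: distrib_left distrib_right sum.distrib)

lemma quad_form_diff: "quad_form K (\<lambda>i j. a i j - b i j) x = quad_form K a x - quad_form K b x"
  unfolding quad_form_def by (simp add: right_diff_distrib left_diff_distrib sum_subtractf)

lemma quad_form_scaleR: "quad_form K a (\<lambda>i. of_real r * x i) = of_real (r\<^sup>2) * quad_form K a x"
  unfolding quad_form_def by (simp add: sum_distrib_left power2_eq_square algebra_simps)

lemma quad_form_scaled_identity:
  assumes "finite K"
  shows "quad_form K (\<lambda>i j. if i = j then c else 0) x = c * of_real (sq_norm_on K x)"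
proof -
  have "quad_form K (\<lambda>i j. if i = j then c else 0) x
      = (\<Sum>i\<in>K. \<Sum>j\<in>K. if i = j then c * (cnj (x i) * x i) else 0)"
    unfolding quad_form_def by (intro sum.cong) auto
  also have "\<dots> = (\<Sum>i\<in>K. c * (cnj (x i) * x i))"
    using assms by simp
  also have "\<dots> = c * of_real (sq_norm_on K x)"
    by (simp add: sq_norm_on_def sum_distrib_left complex_norm_square mult.commute del: of_real_power)
  finally show ?thesis .
qed

lemma quad_form_zero_on: "(\<And>i. i \<in> K \<Longrightarrow> x i = 0) \<Longrightarrow> quad_form K a x = 0"
  unfolding quad_form_def by simp

lemma continuous_on_quad_form: "continuous_on UNIV (\<lambda>x. Re (quad_form K a x))"
  unfolding quad_form_def by (intro continuous_intros continuous_on_product_coordinates)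

lemma pd_on_hermitian: "pd_on K a \<Longrightarrow> i \<in> K \<Longrightarrow> j \<in> K \<Longrightarrow> a j i = cnj (a i j)"
  unfolding pd_on_def by blast

lemma pd_on_pos: "pd_on K a \<Longrightarrow> \<exists>i\<in>K. x i \<noteq> 0 \<Longrightarrow> 0 < Re (quad_form K a x)"
  unfolding pd_on_def by blast

lemma psd_on_hermitian: "psd_on K a \<Longrightarrow> i \<in> K \<Longrightarrow> j \<in> K \<Longrightarrow> a j i = cnj (a i j)"
  unfolding psd_on_def by blast

lemma psd_on_nonneg: "psd_on K a \<Longrightarrow> 0 \<le> Re (quad_form K a x)"
  unfolding psd_on_def by blast

lemma pd_on_cong:
  assumes "\<And>i j. i \<in> K \<Longrightarrow> j \<in> K \<Longrightarrow> a i j = b i j"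
  shows "pd_on K a \<longleftrightarrow> pd_on K b"
proof -
  have "quad_form K a x = quad_form K b x" for x
    by (rule quad_form_cong) (use assms in auto)
  moreover have "(\<forall>i\<in>K. \<forall>j\<in>K. a j i = cnj (a i j)) \<longleftrightarrow> (\<forall>i\<in>K. \<forall>j\<in>K. b j i = cnj (b i j))"
    by (intro ball_cong refl) (simp add: assms)
  ultimately show ?thesis unfolding pd_on_def by simp
qed

lemma pd_on_imp_psd_on:
  assumes "pd_on K a" shows "psd_on K a"
  unfolding psd_on_def
proof (intro conjI allI ballI)
  show "a j i = cnj (a i j)" if "i \<in> K" "j \<in> K" for i j
    using assms that by (rule pd_on_hermitian)
  show "0 \<le> Re (quad_form K a x)" for x
  proof (cases "\<exists>i\<in>K. x i \<noteq> 0")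
    case True
    with assms show ?thesis by (simp add: pd_on_pos less_imp_le)
  next
    case False
    then show ?thesis by (simp add: quad_form_zero_on)
  qed
qed

lemma pd_on_add_psd_on:
  assumes "pd_on K a" and "psd_on K b"
  shows "pd_on K (\<lambda>i j. a i j + b i j)"
  unfolding pd_on_def quad_form_add
proof (intro conjI ballI allI impI)
  fix i j assume ij: "i \<in> K" "j \<in> K"
  have "a j i = cnj (a i j)" by (rule pd_on_hermitian[OF assms(1) ij])
  moreover have "b j i = cnj (b i j)" by (rule psd_on_hermitian[OF assms(2) ij])
  ultimately show "a j i + b j i = cnj (a i j + b i j)" by simp
next
  fix x :: "nat \<Rightarrow> complex" assume "\<exists>i\<in>K. x i \<noteq> 0"
  then have "0 < Re (quad_form K a x)" by (rule pd_on_pos[OF assms(1)])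
  with psd_on_nonneg[OF assms(2)] show "0 < Re (quad_form K a x + quad_form K b x)"
    by (simp add: add_pos_nonneg)
qed

lemma pd_on_scaled_identity:
  assumes "finite K" and "e > 0"
  shows "pd_on K (\<lambda>i j. if i = j then complex_of_real e else 0)"
  unfolding pd_on_def quad_form_scaled_identity[OF assms(1)]
proof (intro conjI allI ballI impI)
  fix x :: "nat \<Rightarrow> complex" assume "\<exists>i\<in>K. x i \<noteq> 0"
  then have "sq_norm_on K x \<noteq> 0" using assms(1) by (simp add: sq_norm_on_eq_0_iff)
  then show "0 < Re (complex_of_real e * complex_of_real (sq_norm_on K x))"
    using assms(2) sq_norm_on_nonneg[of K x] by simp
qed simp

lemma psd_on_subtract_scaled_identity:
  assumes "finite K" and "pd_on K a" and "\<And>x. e * sq_norm_on K x \<le> Re (quad_form K a x)"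
  shows "psd_on K (\<lambda>i j. a i j - (if i = j then complex_of_real e else 0))"
  unfolding psd_on_def quad_form_diff quad_form_scaled_identity[OF assms(1)]
proof (intro conjI allI ballI)
  fix i j assume "i \<in> K" "j \<in> K"
  with assms(2) have "a j i = cnj (a i j)" by (rule pd_on_hermitian)
  then show "a j i - (if j = i then complex_of_real e else 0)
      = cnj (a i j - (if i = j then complex_of_real e else 0))" by simp
next
  fix x
  show "0 \<le> Re (quad_form K a x - complex_of_real e * complex_of_real (sq_norm_on K x))"
    using assms(3)[of x] by simp
qed

lemma compact_sq_norm_on_sphere:
  assumes "finite K"
  shows "compact {x::nat \<Rightarrow> complex. (\<forall>i. i \<notin> K \<longrightarrow> x i = 0) \<and> sq_norm_on K x = 1}"
  (is "compact ?S")
proof -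
  have "compactin (product_topology (\<lambda>_. euclidean) UNIV) (PiE UNIV (\<lambda>_::nat. cball (0::complex) 1))"
    by (simp add: compactin_PiE compact_cball)
  then have box: "compact (PiE UNIV (\<lambda>_::nat. cball (0::complex) 1))"
    by (simp add: euclidean_product_topology compactin_euclidean_iff)
  have "closed ?S"
  proof -
    have "closed ((\<Inter>i\<in>-K. {x::nat \<Rightarrow> complex. x i = 0}) \<inter> {x. sq_norm_on K x = 1})"
      by (intro closed_Int closed_INT ballI closed_Collect_eq continuous_on_product_coordinates
          continuous_on_const continuous_on_sq_norm_on)
    moreover have "?S = (\<Inter>i\<in>-K. {x. x i = 0}) \<inter> {x. sq_norm_on K x = 1}" by blast
    ultimately show ?thesis by simp
  qed
  with box have "compact (PiE UNIV (\<lambda>_. cball 0 1) \<inter> ?S)"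
    by (rule compact_Int_closed)
  moreover have "?S \<subseteq> PiE UNIV (\<lambda>_. cball 0 1)"
  proof
    fix x assume x: "x \<in> ?S"
    have "cmod (x i) \<le> 1" for i
    proof (cases "i \<in> K")
      case True
      then have "(cmod (x i))\<^sup>2 \<le> sq_norm_on K x"
        unfolding sq_norm_on_def using assms by (intro member_le_sum) auto
      then have "(cmod (x i))\<^sup>2 \<le> 1\<^sup>2" using x by simp
      then show ?thesis by (rule power2_le_imp_le) simp
    qed (use x in simp)
    then show "x \<in> PiE UNIV (\<lambda>_. cball 0 1)" by (simp add: PiE_iff)
  qed
  then have "PiE UNIV (\<lambda>_. cball 0 1) \<inter> ?S = ?S" by blast
  ultimately show ?thesis by (simp only:)
qed

lemma finite_clique: "clique n E K \<Longrightarrow> finite K"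
  unfolding clique_def using finite_subset by blast

lemma quad_form_bound_from_sphere:
  assumes "finite K"
    and sphere: "\<And>y. (\<forall>i. i \<notin> K \<longrightarrow> y i = 0) \<Longrightarrow> sq_norm_on K y = 1 \<Longrightarrow> e \<le> Re (quad_form K a y)"
  shows "e * sq_norm_on K x \<le> Re (quad_form K a x)"
proof (cases "sq_norm_on K x = 0")
  case True
  moreover from True have "\<forall>i\<in>K. x i = 0"
    using assms(1) by (simp add: sq_norm_on_eq_0_iff)
  ultimately show ?thesis by (simp add: quad_form_zero_on)
next
  case False
  define s where "s = sq_norm_on K x"
  have s_pos: "s > 0" using False sq_norm_on_nonneg[of K x] by (simp add: s_def)
  define r where "r = 1 / sqrt s"
  have r2: "r\<^sup>2 * s = 1" using s_pos by (simp add: r_def power_divide)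
  define y where "y = (\<lambda>i. if i \<in> K then of_real r * x i else 0)"
  have "sq_norm_on K y = sq_norm_on K (\<lambda>i. of_real r * x i)"
    by (simp add: sq_norm_on_def y_def)
  then have "e \<le> Re (quad_form K a y)"
    using r2 by (intro sphere) (simp_all add: y_def sq_norm_on_scaleR s_def)
  also have "quad_form K a y = quad_form K a (\<lambda>i. of_real r * x i)"
    by (rule quad_form_cong) (simp_all add: y_def)
  also have "\<dots> = of_real (r\<^sup>2) * quad_form K a x"
    by (rule quad_form_scaleR)
  finally have "e \<le> r\<^sup>2 * Re (quad_form K a x)" by simp
  then have "e * s \<le> r\<^sup>2 * Re (quad_form K a x) * s"
    using s_pos by (simp add: mult_right_mono)
  also have "\<dots> = (r\<^sup>2 * s) * Re (quad_form K a x)"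
    by (simp only: ac_simps)
  finally show ?thesis using r2 by (simp add: s_def)
qed

lemma pd_on_coercive:
  assumes "finite K" and "pd_on K a"
  obtains e where "e > 0" and "\<And>x. e * sq_norm_on K x \<le> Re (quad_form K a x)"
proof (cases "K = {}")
  case True
  then show ?thesis by (intro that[of 1]) (auto simp: sq_norm_on_def quad_form_def)
next
  case False
  define S where "S = {x::nat \<Rightarrow> complex. (\<forall>i. i \<notin> K \<longrightarrow> x i = 0) \<and> sq_norm_on K x = 1}"
  obtain k where "k \<in> K" using False by blast
  have "sq_norm_on K (\<lambda>i. if i = k then 1 else 0) = (\<Sum>i\<in>K. if i = k then 1 else 0)"
    unfolding sq_norm_on_def by (intro sum.cong) auto
  then have "(\<lambda>i. if i = k then 1 else 0) \<in> S"
    using assms(1) \<open>k \<in> K\<close> by (simp add: S_def)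
  then have "S \<noteq> {}" by blast
  then obtain x0 where x0: "x0 \<in> S"
    and min: "\<And>y. y \<in> S \<Longrightarrow> Re (quad_form K a x0) \<le> Re (quad_form K a y)"
    using continuous_attains_inf[OF compact_sq_norm_on_sphere[OF assms(1), folded S_def] \<open>S \<noteq> {}\<close>
        continuous_on_subset[OF continuous_on_quad_form subset_UNIV]]
    by blast
  have "\<exists>i\<in>K. x0 i \<noteq> 0"
    using x0 assms(1) sq_norm_on_eq_0_iff[of K x0] by (auto simp: S_def)
  then have "0 < Re (quad_form K a x0)"
    by (rule pd_on_pos[OF assms(2)])
  moreover have "Re (quad_form K a x0) * sq_norm_on K x \<le> Re (quad_form K a x)" for x
    using assms(1) by (rule quad_form_bound_from_sphere) (simp add: min S_def)
  ultimately show ?thesis by (rule that)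
qed

lemma partial_pd_coercive:
  assumes "partial_pd n E a"
  obtains e where "e > 0"
    and "\<And>K x. clique n E K \<Longrightarrow> e * sq_norm_on K x \<le> Re (quad_form K a x)"
proof -
  let ?C = "{K. clique n E K}"
  have "finite ?C" by (rule finite_subset[of _ "Pow {..<n}"]) (auto simp: clique_def)
  have "\<exists>e>0. \<forall>x. e * sq_norm_on K x \<le> Re (quad_form K a x)" if "K \<in> ?C" for K
  proof -
    have "finite K" "pd_on K a"
      using that assms finite_clique unfolding partial_pd_def by blast+
    then show ?thesis by (metis pd_on_coercive)
  qed
  then obtain f where f: "\<And>K. K \<in> ?C \<Longrightarrow> f K > 0 \<and> (\<forall>x. f K * sq_norm_on K x \<le> Re (quad_form K a x))"
    by metis
  have "{} \<in> ?C" by (simp add: clique_def)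
  define e where "e = Min (f ` ?C)"
  have "e > 0" unfolding e_def using \<open>finite ?C\<close> \<open>{} \<in> ?C\<close> f by (subst Min_gr_iff) auto
  moreover have "e * sq_norm_on K x \<le> Re (quad_form K a x)" if "K \<in> ?C" for K x
  proof -
    have "e \<le> f K" using \<open>finite ?C\<close> that by (simp add: e_def)
    then have "e * sq_norm_on K x \<le> f K * sq_norm_on K x"
      by (rule mult_right_mono) (rule sq_norm_on_nonneg)
    with f[OF that] show ?thesis by (meson order.trans)
  qed
  ultimately show ?thesis using that by blast
qed

lemma partial_pd_subtract_scaled_identity:
  assumes "partial_pd n E a"
  obtains e where "e > 0"
    and "partial_psd n E (\<lambda>i j. a i j - (if i = j then complex_of_real e else 0))"
proof -
  obtain e where "e > 0"
    and e: "\<And>K x. clique n E K \<Longrightarrow> e * sq_norm_on K x \<le> Re (quad_form K a x)"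
    using partial_pd_coercive[OF assms] by blast
  have psd: "psd_on K (\<lambda>i j. a i j - (if i = j then complex_of_real e else 0))"
    if "clique n E K" for K
  proof (rule psd_on_subtract_scaled_identity)
    show "finite K" using that by (rule finite_clique)
    show "pd_on K a" using assms that unfolding partial_pd_def by blast
  qed (rule e[OF that])
  have hermitian: "\<forall>(i, j)\<in>E. a j i - (if j = i then complex_of_real e else 0)
      = cnj (a i j - (if i = j then complex_of_real e else 0))"
  proof clarify
    fix i j assume "(i, j) \<in> E"
    then have "a j i = cnj (a i j)" using assms unfolding partial_pd_def by blast
    then show "a j i - (if j = i then complex_of_real e else 0)
        = cnj (a i j - (if i = j then complex_of_real e else 0))" by simp
  qed
  have "partial_psd n E (\<lambda>i j. a i j - (if i = j then complex_of_real e else 0))"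
    unfolding partial_psd_def by (intro conjI allI impI hermitian psd)
  with \<open>e > 0\<close> show ?thesis by (rule that)
qed

lemma pos_def_mat_iff_pd_on:
  "M \<in> carrier_mat n n \<Longrightarrow> pos_def_mat M \<longleftrightarrow> pd_on {..<n} (\<lambda>i j. M $$ (i, j))"
  by (simp add: pos_def_mat_def)

lemma pos_semidef_mat_iff_psd_on:
  "M \<in> carrier_mat n n \<Longrightarrow> pos_semidef_mat M \<longleftrightarrow> psd_on {..<n} (\<lambda>i j. M $$ (i, j))"
  by (simp add: pos_semidef_mat_def)

lemma pos_def_mat_imp_pos_semidef_mat: "pos_def_mat M \<Longrightarrow> pos_semidef_mat M"
  unfolding pos_def_mat_def pos_semidef_mat_def by (blast intro: pd_on_imp_psd_on)

lemma pos_def_mat_add_pos_semidef_mat: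
  assumes "M \<in> carrier_mat n n" "N \<in> carrier_mat n n" "pos_def_mat M" "pos_semidef_mat N"
  shows "pos_def_mat (M + N)"
proof -
  have "pd_on {..<n} (\<lambda>i j. M $$ (i, j) + N $$ (i, j))"
    using assms by (simp add: pos_def_mat_iff_pd_on pos_semidef_mat_iff_psd_on pd_on_add_psd_on)
  moreover have "pd_on {..<n} (\<lambda>i j. (M + N) $$ (i, j)) \<longleftrightarrow> pd_on {..<n} (\<lambda>i j. M $$ (i, j) + N $$ (i, j))"
    using assms(1,2) by (intro pd_on_cong) simp
  ultimately show ?thesis
    using assms(1,2) by (simp add: pos_def_mat_iff_pd_on[of "M + N" n])
qed

lemma completions_add:
  assumes "E \<subseteq> {..<n} \<times> {..<n}" "M \<in> completions n E a" "N \<in> completions n E b"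
  shows "M + N \<in> completions n E (\<lambda>i j. a i j + b i j)"
  using assms by (fastforce simp: completions_def)

lemma pd_completion_exists:
  assumes "graph_on n E" and "completable n E" and "partial_pd n E a"
  obtains N where "N \<in> pd_completions n E a"
proof -
  have E: "E \<subseteq> {..<n} \<times> {..<n}" using assms(1) by (simp add: graph_on_def)
  obtain e where "e > 0"
    and "partial_psd n E (\<lambda>i j. a i j - (if i = j then complex_of_real e else 0))"
    using partial_pd_subtract_scaled_identity[OF assms(3)] by blast
  then obtain M where M: "M \<in> completions n E (\<lambda>i j. a i j - (if i = j then complex_of_real e else 0))"
    and "pos_semidef_mat M"
    using assms(2) by (auto simp: completable_def)
  define D where "D = Matrix.mat n n (\<lambda>(i, j). if i = j then complex_of_real e else 0)"
  have "D \<in> completions n E (\<lambda>i j. if i = j then complex_of_real e else 0)"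
    using E by (auto simp: D_def completions_def)
  from completions_add[OF E this M] have "D + M \<in> completions n E a" by simp
  moreover have "pos_def_mat D"
  proof -
    have "pd_on {..<n} (\<lambda>i j. if i = j then complex_of_real e else 0)"
      using \<open>e > 0\<close> by (intro pd_on_scaled_identity) simp_all
    moreover have "pd_on {..<n} (\<lambda>i j. D $$ (i, j))
        \<longleftrightarrow> pd_on {..<n} (\<lambda>i j. if i = j then complex_of_real e else 0)"
      by (rule pd_on_cong) (simp add: D_def)
    moreover have "D \<in> carrier_mat n n" by (simp add: D_def)
    ultimately show ?thesis by (simp add: pos_def_mat_iff_pd_on)
  qed
  with \<open>pos_semidef_mat M\<close> M have "pos_def_mat (D + M)"
    by (intro pos_def_mat_add_pos_semidef_mat[of _ n]) (auto simp: D_def completions_def)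
  ultimately show ?thesis using that by (simp add: pd_completions_def)
qed

theorem lemma5p4:
  fixes n :: nat and E :: "(nat \<times> nat) set" and A B :: "nat \<Rightarrow> nat \<Rightarrow> complex"
  assumes "graph_on n E" and "completable n E"
    and "partial_pd n E A" and "partial_pd n E B"
  shows "pd_completions n E (\<lambda>i j. A i j - B i j)
           \<subseteq> {M - N | M N. M \<in> pd_completions n E A \<and> N \<in> pd_completions n E B}"
proof
  fix P assume P: "P \<in> pd_completions n E (\<lambda>i j. A i j - B i j)"
  obtain N where N: "N \<in> pd_completions n E B"
    using pd_completion_exists[OF assms(1,2,4)] .
  have E: "E \<subseteq> {..<n} \<times> {..<n}" using assms(1) by (simp add: graph_on_def)
  have carrier: "P \<in> carrier_mat n n" "N \<in> carrier_mat n n"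
    using P N by (auto simp: pd_completions_def completions_def)
  have "P + N \<in> completions n E (\<lambda>i j. (A i j - B i j) + B i j)"
    using completions_add[OF E, of P _ N] P N unfolding pd_completions_def by blast
  moreover have "pos_def_mat (P + N)"
    using pos_def_mat_add_pos_semidef_mat[OF carrier] P N pos_def_mat_imp_pos_semidef_mat
    by (auto simp: pd_completions_def)
  ultimately have "P + N \<in> pd_completions n E A" by (simp add: pd_completions_def)
  moreover have "P = (P + N) - N" using carrier by (intro eq_matI) auto
  ultimately show "P \<in> {M - N | M N. M \<in> pd_completions n E A \<and> N \<in> pd_completions n E B}"
    using N by blast
qed

end
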